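(* Let $c$ and $n$ be odd positive integers with $n>c>\frac{n}{2}$, and let $K$ be the set partition of $S_c$ whose only part with more than one element is the set of cyclic shifts of the identity of $S_c$. Then $$|{}^nH_n^{even}|-|{}^nH_n^{odd}| = |{}^nN_n^{odd}|-|{}^nN_n^{even}|.$$
   Context: Permutations are written in one-line notation. The order permutation (standardization) of a word $u$ of distinct positive integers of length $\ell$ is the unique $\pi\in S_\ell$ with $\pi_i<\pi_j$ iff $u_i<u_j$. A hit in a permutation is a contiguous subword of length $c$ whose order permutation is a cyclic shift of $12\cdots c$ (one of $12\cdots c,\ 23\cdots c1,\ldots,c12\cdots(c-1)$); a hit "starts at" the position of its first letter. A non-avoider is a permutation with at least one hit. A hit-hugger in $S_n$ is a permutation with exactly two hits, one starting at position $1$ and one starting at position $n-c+1$. $N_n$ and $H_n$ denote the sets of non-avoiders and hit-huggers in $S_n$; a superscript "even"/"odd" on the right restricts to permutations of that sign, and a superscript $n$ on the left restricts to permutations whose last letter is $n$. *)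

theory Defs
  imports "HOL-Combinatorics.Permutations"
begin

definition is_order_perm :: "nat \<Rightarrow> (nat \<Rightarrow> nat) \<Rightarrow> (nat \<Rightarrow> nat) \<Rightarrow> bool" where
  "is_order_perm l u pi \<longleftrightarrow>
     (\<forall>j<l. pi j \<in> {1..l}) \<and> inj_on pi {..<l} \<and>
     (\<forall>j<l. \<forall>k<l. pi j < pi k \<longleftrightarrow> u j < u k)"

text \<open>The k-th cyclic shift of the identity 12...c (k < c): (k+1)(k+2)...c 1 ... k.\<close>
definition cyc_shift :: "nat \<Rightarrow> nat \<Rightarrow> nat \<Rightarrow> nat" where
  "cyc_shift c k j = (j + k) mod c + 1"

definition hit_at :: "nat \<Rightarrow> nat \<Rightarrow> (nat \<Rightarrow> nat) \<Rightarrow> nat \<Rightarrow> bool" where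
  "hit_at n c p i \<longleftrightarrow> 1 \<le> i \<and> i + c \<le> n + 1 \<and>
     (\<exists>k<c. is_order_perm c (\<lambda>j. p (i + j)) (cyc_shift c k))"

definition hits :: "nat \<Rightarrow> nat \<Rightarrow> (nat \<Rightarrow> nat) \<Rightarrow> nat set" where
  "hits n c p = {i. hit_at n c p i}"

definition non_avoider :: "nat \<Rightarrow> nat \<Rightarrow> (nat \<Rightarrow> nat) \<Rightarrow> bool" where
  "non_avoider n c p \<longleftrightarrow> hits n c p \<noteq> {}"

definition hit_hugger :: "nat \<Rightarrow> nat \<Rightarrow> (nat \<Rightarrow> nat) \<Rightarrow> bool" where
  "hit_hugger n c p \<longleftrightarrow> card (hits n c p) = 2 \<and> 1 \<in> hits n c p \<and> n - c + 1 \<in> hits n c p"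

definition nN :: "nat \<Rightarrow> nat \<Rightarrow> bool \<Rightarrow> (nat \<Rightarrow> nat) set" where
  "nN n c ev = {p. p permutes {1..n} \<and> p n = n \<and> non_avoider n c p \<and> evenperm p = ev}"

definition nH :: "nat \<Rightarrow> nat \<Rightarrow> bool \<Rightarrow> (nat \<Rightarrow> nat) set" where
  "nH n c ev = {p. p permutes {1..n} \<and> p n = n \<and> hit_hugger n c p \<and> evenperm p = ev}"

end

theory Submission
  imports Defs "HOL-Number_Theory.Cong"
begin

text \<open>Cycling the values 1, ..., n - 1 is an odd permutation
  (n - 1 is even) and keeps every hit that does not involve position n, while swapping the
  value at position 1 with its partner in {1,2}, {3,4}, ..., {n-2,n-1} is odd and leaves all hits
  starting after position 1 intact. These sign-reversing involutions balance the permutations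
  having a hit away from position n, and those having the final hit and no hits except at
  positions 1 and n - c + 1. Non-avoiders are the former plus the permutations whose only hit
  is the final one; the latter are the hit-huggers plus the same permutations.\<close>

definition rotate_values :: "nat \<Rightarrow> nat \<Rightarrow> nat" where
  "rotate_values k v = (if 1 \<le> v \<and> v < k then v + 1 else if v = k \<and> 1 \<le> k then 1 else v)"

lemma rotate_values_Suc_Suc:
  "rotate_values (Suc (Suc k)) = rotate_values (Suc k) \<circ> Transposition.transpose (Suc k) (Suc (Suc k))"
  by (rule ext) (auto simp: rotate_values_def Transposition.transpose_def)

lemma rotate_values_permutes_evenperm:
  assumes "k \<ge> 1"
  shows "rotate_values k permutes {1..k} \<and> evenperm (rotate_values k) = odd k"
  using assms
proof (induction k rule: nat_induct_at_least)
  case base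
  have r: "rotate_values 1 = id" by (auto simp: rotate_values_def)
  show ?case unfolding r by (intro conjI permutes_id) (simp only: evenperm_id odd_one not_False_eq_True)
next
  case (Suc k)
  then obtain j where k: "k = Suc j" by (cases k) auto
  let ?t = "Transposition.transpose (Suc j) (Suc (Suc j))"
  have t: "?t permutes {1..Suc (Suc j)}"
    by (rule permutes_swap_id) auto
  have r: "rotate_values (Suc j) permutes {1..Suc (Suc j)}"
    by (rule permutes_subset[OF conjunct1[OF Suc.IH[unfolded k]]]) auto
  have "evenperm (rotate_values (Suc j) \<circ> ?t) = (evenperm (rotate_values (Suc j)) = evenperm ?t)"
    by (rule evenperm_comp[OF permutes_imp_permutation[OF finite_atLeastAtMost r] permutation_swap_id])
  moreover have "evenperm ?t = False" by (simp add: evenperm_swap)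
  ultimately show ?case
    using conjunct2[OF Suc.IH[unfolded k]] permutes_compose[OF t r]
    unfolding k rotate_values_Suc_Suc by (simp del: comp_apply)
qed

lemma is_order_perm_cong:
  assumes "\<And>j k. j < l \<Longrightarrow> k < l \<Longrightarrow> u' j < u' k \<longleftrightarrow> u j < u k"
  shows "is_order_perm l u' pi \<longleftrightarrow> is_order_perm l u pi"
  using assms unfolding is_order_perm_def by auto

lemma is_order_perm_inj:
  assumes "is_order_perm l u pi"
  shows "inj_on u {..<l}"
proof (rule inj_onI)
  fix j k assume "j \<in> {..<l}" "k \<in> {..<l}" "u j = u k"
  then have "\<not> pi j < pi k" "\<not> pi k < pi j"
    using assms unfolding is_order_perm_def by auto
  then have "pi j = pi k" by simp
  then show "j = k"
    using assms \<open>j \<in> {..<l}\<close> \<open>k \<in> {..<l}\<close> unfolding is_order_perm_def inj_on_def by blast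
qed

lemma is_order_perm_max:
  assumes "is_order_perm l u pi" "j < l" "k < l" "pi j = l"
  shows "u k \<le> u j"
proof -
  have "pi k \<le> pi j" using assms unfolding is_order_perm_def by auto
  then show ?thesis using assms(1-3) unfolding is_order_perm_def by (meson leD leI)
qed

lemma cyc_shift_range: "c > 0 \<Longrightarrow> cyc_shift c k j \<in> {1..c}"
  unfolding cyc_shift_def by (simp add: Suc_leI)

lemma cyc_shift_inj: "inj_on (cyc_shift c k) {..<c}"
proof (rule inj_onI)
  fix j l assume "j \<in> {..<c}" "l \<in> {..<c}" "cyc_shift c k j = cyc_shift c k l"
  then show "j = l"
    using cong_add_rcancel_nat[of j k l c] cong_less_modulus_unique_nat[of j l c]
    unfolding cyc_shift_def by (auto simp: cong_def)
qed

lemma cyc_shift_top: "k < c \<Longrightarrow> cyc_shift c k (c - 1 - k) = c"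
  unfolding cyc_shift_def by simp

lemma cyc_shift_Suc:
  assumes "c > 0"
  shows "cyc_shift c (Suc k mod c) j = (if cyc_shift c k j = c then 1 else cyc_shift c k j + 1)"
proof -
  have "cyc_shift c (Suc k mod c) j = cyc_shift c k j mod c + 1"
    unfolding cyc_shift_def by (simp add: mod_Suc_eq mod_add_right_eq)
  then show ?thesis
    using cyc_shift_range[OF assms, of k j] by auto
qed

definition cyclic_pattern :: "nat \<Rightarrow> (nat \<Rightarrow> nat) \<Rightarrow> bool" where
  "cyclic_pattern c u \<longleftrightarrow> (\<exists>k<c. is_order_perm c u (cyc_shift c k))"

lemma hit_at_iff:
  "hit_at n c p i \<longleftrightarrow> 1 \<le> i \<and> i + c \<le> n + 1 \<and> cyclic_pattern c (\<lambda>j. p (i + j))"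
  unfolding hit_at_def cyclic_pattern_def ..

lemma cyclic_pattern_cong:
  assumes "\<And>j k. j < c \<Longrightarrow> k < c \<Longrightarrow> u' j < u' k \<longleftrightarrow> u j < u k"
  shows "cyclic_pattern c u' \<longleftrightarrow> cyclic_pattern c u"
  unfolding cyclic_pattern_def using is_order_perm_cong[OF assms] by simp

text \<open>Cycling the values 1, ..., N keeps the relative order of a window unless the window
  contains its maximum N, which then becomes the minimum; this advances the cyclic shift by one.\<close>
lemma cyclic_pattern_rotate_values:
  assumes pat: "cyclic_pattern c u" and vals: "\<And>j. j < c \<Longrightarrow> u j \<in> {1..N}"
  shows "cyclic_pattern c (rotate_values N \<circ> u)"
proof -
  obtain k where k: "k < c" and ord: "is_order_perm c u (cyc_shift c k)"
    using pat unfolding cyclic_pattern_def by blast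
  define t where "t = c - 1 - k"
  have t: "t < c" "cyc_shift c k t = c"
    using k cyc_shift_top[OF k] unfolding t_def by auto
  have max: "u j \<le> u t" if "j < c" for j
    using is_order_perm_max[OF ord t(1) that t(2)] .
  show ?thesis
  proof (cases "u t = N")
    case False
    have "rotate_values N (u j) = u j + 1" if "j < c" for j
      using max[OF that] vals[OF that] vals[OF t(1)] False by (auto simp: rotate_values_def)
    then have "cyclic_pattern c (rotate_values N \<circ> u) \<longleftrightarrow> cyclic_pattern c u"
      by (intro cyclic_pattern_cong) auto
    then show ?thesis using pat by simp
  next
    case True
    let ?pi = "cyc_shift c k"
    have c: "c > 0" using k by simp
    have top_u: "u j = N \<longleftrightarrow> j = t" if "j < c" for j
      using inj_onD[OF is_order_perm_inj[OF ord], of j t] True t(1) that by auto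
    have top_pi: "?pi j = c \<longleftrightarrow> j = t" if "j < c" for j
      using inj_onD[OF cyc_shift_inj[of c k], of j t] t that by auto
    have rot: "rotate_values N (u j) = (if j = t then 1 else u j + 1)" if "j < c" for j
      using top_u[OF that] vals[OF that] max[OF that] True by (auto simp: rotate_values_def)
    have shift: "cyc_shift c (Suc k mod c) j = (if j = t then 1 else ?pi j + 1)" if "j < c" for j
      using cyc_shift_Suc[OF c, of k j] top_pi[OF that] by simp
    have cmp: "?pi j < ?pi l \<longleftrightarrow> u j < u l" if "j < c" "l < c" for j l
      using ord that unfolding is_order_perm_def by blast
    have "is_order_perm c (rotate_values N \<circ> u) (cyc_shift c (Suc k mod c))"
      unfolding is_order_perm_def
    proof (intro conjI allI impI)
      fix j assume "j < c"
      then show "cyc_shift c (Suc k mod c) j \<in> {1..c}" using cyc_shift_range[OF c] by blast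
    next
      show "inj_on (cyc_shift c (Suc k mod c)) {..<c}" by (rule cyc_shift_inj)
    next
      fix j l assume jl: "j < c" "l < c"
      have pos: "1 \<le> ?pi l" "1 \<le> u l"
        using cyc_shift_range[OF c, of k l] vals[OF jl(2)] by auto
      show "cyc_shift c (Suc k mod c) j < cyc_shift c (Suc k mod c) l \<longleftrightarrow>
          (rotate_values N \<circ> u) j < (rotate_values N \<circ> u) l"
        unfolding shift[OF jl(1)] shift[OF jl(2)] comp_def rot[OF jl(1)] rot[OF jl(2)]
        using cmp[OF jl] pos by auto
    qed
    then show ?thesis using c unfolding cyclic_pattern_def by (meson mod_less_divisor)
  qed
qed

lemma permutes_image_fixpoint_compl:
  assumes "p permutes S" "p a = a" "x \<in> S" "x \<noteq> a"
  shows "p x \<in> S - {a}"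
  using assms permutes_in_image permutes_inj by (metis Diff_iff injD singletonD)

lemma hit_at_rotate_values:
  assumes p: "p permutes {1..n}" "p n = n" and hit: "hit_at n c p i" and i: "i + c \<le> n"
  shows "hit_at n c (rotate_values (n - 1) \<circ> p) i"
proof -
  have "p (i + j) \<in> {1..n - 1}" if "j < c" for j
    using permutes_image_fixpoint_compl[OF p, of "i + j"] hit i that
    unfolding hit_at_iff by auto
  then have "cyclic_pattern c (rotate_values (n - 1) \<circ> (\<lambda>j. p (i + j)))"
    using hit cyclic_pattern_rotate_values unfolding hit_at_iff by blast
  then show ?thesis using hit unfolding hit_at_iff by (simp add: comp_def)
qed

definition partner :: "nat \<Rightarrow> nat" where
  "partner v = (if odd v then v + 1 else v - 1)"

lemma partner_partner: "v \<ge> 1 \<Longrightarrow> partner (partner v) = v"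
  unfolding partner_def by auto

lemma partner_in_range:
  assumes "odd n" "v \<in> {1..n - 1}"
  shows "partner v \<in> {1..n - 1}" "partner v \<noteq> v"
proof -
  have "even (n - 1)" using assms(1) by simp
  then have "v \<noteq> n - 1" if "odd v" using that by auto
  then show "partner v \<in> {1..n - 1}" "partner v \<noteq> v"
    using assms(2) unfolding partner_def by auto
qed

lemma transpose_adjacent_less_iff:
  fixes a b x y :: nat
  assumes "b = a + 1 \<or> a = b + 1" "x \<noteq> a" "y \<noteq> a"
  shows "Transposition.transpose a b x < Transposition.transpose a b y \<longleftrightarrow> x < y"
  using assms by (auto simp: Transposition.transpose_def)

definition swap_first_partner :: "(nat \<Rightarrow> nat) \<Rightarrow> nat \<Rightarrow> nat" where
  "swap_first_partner p = Transposition.transpose (p 1) (partner (p 1)) \<circ> p"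

lemma swap_first_partner_props:
  assumes p: "p permutes {1..n}" "p n = n" and n: "odd n" "n \<ge> 2"
  shows "swap_first_partner p permutes {1..n}" "swap_first_partner p n = n"
    "evenperm (swap_first_partner p) \<longleftrightarrow> \<not> evenperm p"
    "swap_first_partner (swap_first_partner p) = p"
proof -
  define a where "a = p 1"
  let ?s = "Transposition.transpose a (partner a)"
  have a: "a \<in> {1..n - 1}"
    using permutes_image_fixpoint_compl[OF p, of 1] n unfolding a_def by auto
  have b: "partner a \<in> {1..n - 1}" "partner a \<noteq> a"
    using partner_in_range[OF n(1) a] by auto
  have sp: "swap_first_partner p = ?s \<circ> p"
    unfolding swap_first_partner_def a_def ..
  have s: "?s permutes {1..n}"
    using a b by (intro permutes_swap_id) auto
  show "swap_first_partner p permutes {1..n}"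
    unfolding sp by (rule permutes_compose[OF p(1) s])
  show "swap_first_partner p n = n"
    unfolding sp using p(2) a b by (auto simp: Transposition.transpose_def)
  have "evenperm (?s \<circ> p) = (evenperm ?s = evenperm p)"
    by (rule evenperm_comp[OF permutation_swap_id permutes_imp_permutation[OF finite_atLeastAtMost p(1)]])
  then show "evenperm (swap_first_partner p) \<longleftrightarrow> \<not> evenperm p"
    unfolding sp using b(2) by (simp add: evenperm_swap)
  have first: "swap_first_partner p 1 = partner a"
    unfolding sp by (simp add: a_def Transposition.transpose_def)
  have "swap_first_partner (swap_first_partner p)
      = Transposition.transpose (partner a) (partner (partner a)) \<circ> swap_first_partner p"
    unfolding swap_first_partner_def[of "swap_first_partner p"] first ..
  also have "\<dots> = ?s \<circ> (?s \<circ> p)"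
    using a partner_partner unfolding sp by (simp add: transpose_commute)
  also have "\<dots> = p"
    by (simp only: comp_assoc[symmetric] transpose_comp_involutory id_comp)
  finally show "swap_first_partner (swap_first_partner p) = p" .
qed

text \<open>The swapped values p 1 and its partner are adjacent, and p 1 does not occur in a window
  starting at position i \<ge> 2, so relative orders there are unchanged.\<close>
lemma hit_at_swap_first_partner:
  assumes p: "p permutes {1..n}" "p n = n" and n: "odd n" "n \<ge> 2"
    and hit: "hit_at n c p i" and i: "i \<ge> 2"
  shows "hit_at n c (swap_first_partner p) i"
proof -
  define a where "a = p 1"
  have a: "a \<in> {1..n - 1}"
    using permutes_image_fixpoint_compl[OF p, of 1] n unfolding a_def by auto
  have adj: "partner a = a + 1 \<or> a = partner a + 1"
    using a unfolding partner_def by auto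
  have avoid: "p (i + j) \<noteq> a" for j
    using injD[OF permutes_inj[OF p(1)], of "i + j" 1] i unfolding a_def by auto
  have "cyclic_pattern c (\<lambda>j. swap_first_partner p (i + j)) \<longleftrightarrow> cyclic_pattern c (\<lambda>j. p (i + j))"
    unfolding swap_first_partner_def a_def[symmetric] comp_def
    by (rule cyclic_pattern_cong, rule transpose_adjacent_less_iff[OF adj avoid avoid])
  then show ?thesis using hit unfolding hit_at_iff by blast
qed

lemma hits_subset: "hits n c p \<subseteq> {1..n - c + 1}"
  unfolding hits_def hit_at_def by auto

lemma hits_swap_first_partner:
  assumes p: "p permutes {1..n}" "p n = n" and n: "odd n" "n \<ge> 2"
  shows "hits n c (swap_first_partner p) - {1} = hits n c p - {1}"
proof -
  have "hits n c q - {1} \<subseteq> hits n c (swap_first_partner q) - {1}"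
    if "q permutes {1..n}" "q n = n" for q
    using hit_at_swap_first_partner[OF that n] hits_subset unfolding hits_def by fastforce
  from this[OF p] this[OF swap_first_partner_props(1,2)[OF p n]]
  show ?thesis unfolding swap_first_partner_props(4)[OF p n] by blast
qed

lemma hit_hugger_iff:
  assumes "n - c + 1 \<noteq> 1"
  shows "hit_hugger n c p \<longleftrightarrow> hits n c p = {1, n - c + 1}"
proof
  assume h: "hit_hugger n c p"
  then obtain x y where "hits n c p = {x, y}" "x \<noteq> y"
    unfolding hit_hugger_def card_2_iff by blast
  with h assms show "hits n c p = {1, n - c + 1}"
    unfolding hit_hugger_def by (auto simp: doubleton_eq_iff)
next
  assume "hits n c p = {1, n - c + 1}"
  with assms show "hit_hugger n c p"
    unfolding hit_hugger_def by simp
qed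

definition perms_by_hits :: "nat \<Rightarrow> nat \<Rightarrow> bool \<Rightarrow> (nat set \<Rightarrow> bool) \<Rightarrow> (nat \<Rightarrow> nat) set" where
  "perms_by_hits n c ev P =
     {p. p permutes {1..n} \<and> p n = n \<and> evenperm p = ev \<and> P (hits n c p)}"

lemma finite_perms_by_hits: "finite (perms_by_hits n c ev P)"
  by (rule finite_subset[OF _ finite_permutations[OF finite_atLeastAtMost]])
    (auto simp: perms_by_hits_def)

lemma card_perms_by_hits_split:
  "card (perms_by_hits n c ev P) =
     card (perms_by_hits n c ev (\<lambda>H. P H \<and> Q H)) + card (perms_by_hits n c ev (\<lambda>H. P H \<and> \<not> Q H))"
proof -
  have "perms_by_hits n c ev P =
      perms_by_hits n c ev (\<lambda>H. P H \<and> Q H) \<union> perms_by_hits n c ev (\<lambda>H. P H \<and> \<not> Q H)"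
    "perms_by_hits n c ev (\<lambda>H. P H \<and> Q H) \<inter> perms_by_hits n c ev (\<lambda>H. P H \<and> \<not> Q H) = {}"
    by (auto simp: perms_by_hits_def)
  then show ?thesis by (simp add: card_Un_disjoint finite_perms_by_hits)
qed

lemma perms_by_hits_cong:
  assumes "\<And>H. H \<subseteq> {1..n - c + 1} \<Longrightarrow> P H \<longleftrightarrow> Q H"
  shows "perms_by_hits n c ev P = perms_by_hits n c ev Q"
  using assms hits_subset unfolding perms_by_hits_def by blast

lemma card_eq_if_inj_flips:
  fixes A :: "bool \<Rightarrow> 'a set"
  assumes "\<And>b. finite (A b)" "\<And>b. inj_on f (A b)" "\<And>b. f ` A b \<subseteq> A (\<not> b)"
  shows "card (A True) = card (A False)"
  using card_inj_on_le[OF assms(2,3,1), of True] card_inj_on_le[OF assms(2,3,1), of False] by simp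

definition has_inner_hit :: "nat \<Rightarrow> nat \<Rightarrow> nat set \<Rightarrow> bool" where
  "has_inner_hit n c H \<longleftrightarrow> (\<exists>i\<in>H. i + c \<le> n)"

definition final_hit_within_ends :: "nat \<Rightarrow> nat \<Rightarrow> nat set \<Rightarrow> bool" where
  "final_hit_within_ends n c H \<longleftrightarrow> n - c + 1 \<in> H \<and> H \<subseteq> {1, n - c + 1}"

lemma card_nN_split:
  assumes "c < n"
  shows "card (nN n c ev) = card (perms_by_hits n c ev (has_inner_hit n c))
    + card (perms_by_hits n c ev (\<lambda>H. H = {n - c + 1}))"
proof -
  have only_final: "H \<noteq> {} \<and> \<not> has_inner_hit n c H \<longleftrightarrow> H = {n - c + 1}"
    if "H \<subseteq> {1..n - c + 1}" for H
  proof -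
    have "\<not> i + c \<le> n \<longleftrightarrow> i = n - c + 1" if "i \<in> H" for i
      using \<open>H \<subseteq> {1..n - c + 1}\<close> that assms by auto
    then show ?thesis unfolding has_inner_hit_def by blast
  qed
  have "nN n c ev = perms_by_hits n c ev (\<lambda>H. H \<noteq> {})"
    unfolding nN_def perms_by_hits_def non_avoider_def by auto
  moreover have "perms_by_hits n c ev (\<lambda>H. H \<noteq> {} \<and> has_inner_hit n c H)
      = perms_by_hits n c ev (has_inner_hit n c)"
    by (rule perms_by_hits_cong) (auto simp: has_inner_hit_def)
  ultimately show ?thesis
    using card_perms_by_hits_split[of n c ev "\<lambda>H. H \<noteq> {}" "has_inner_hit n c"]
      perms_by_hits_cong[OF only_final] by simp
qed

lemma card_final_hit_within_ends_split:
  assumes "c < n"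
  shows "card (perms_by_hits n c ev (final_hit_within_ends n c)) = card (nH n c ev)
    + card (perms_by_hits n c ev (\<lambda>H. H = {n - c + 1}))"
proof -
  have "nH n c ev = perms_by_hits n c ev (\<lambda>H. final_hit_within_ends n c H \<and> 1 \<in> H)"
    using hit_hugger_iff[of n c] assms
    unfolding nH_def perms_by_hits_def final_hit_within_ends_def by auto
  moreover have "perms_by_hits n c ev (\<lambda>H. final_hit_within_ends n c H \<and> 1 \<notin> H)
      = perms_by_hits n c ev (\<lambda>H. H = {n - c + 1})"
    using assms by (intro perms_by_hits_cong) (auto simp: final_hit_within_ends_def)
  ultimately show ?thesis
    using card_perms_by_hits_split[of n c ev "final_hit_within_ends n c" "\<lambda>H. 1 \<in> H"] by simp
qed

lemma card_perms_by_hits_inner_even_odd: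
  assumes n: "odd n" "n \<ge> 2"
  shows "card (perms_by_hits n c True (has_inner_hit n c))
    = card (perms_by_hits n c False (has_inner_hit n c))"
proof (rule card_eq_if_inj_flips[where f = "(\<circ>) (rotate_values (n - 1))"])
  let ?r = "rotate_values (n - 1)"
  have "?r permutes {1..n - 1}" "\<not> evenperm ?r"
    using rotate_values_permutes_evenperm[of "n - 1"] n by auto
  moreover have "{1..n - 1} \<subseteq> {1..n}" by auto
  ultimately have r: "?r permutes {1..n}" "\<not> evenperm ?r"
    using permutes_subset by blast+
  have rn: "?r n = n" using n by (auto simp: rotate_values_def)
  show "finite (perms_by_hits n c b (has_inner_hit n c))" for b by (rule finite_perms_by_hits)
  show "inj_on ((\<circ>) ?r) (perms_by_hits n c b (has_inner_hit n c))" for b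
    using injD[OF permutes_inj[OF r(1)]] by (intro inj_onI) (auto simp: fun_eq_iff)
  show "(\<circ>) ?r ` perms_by_hits n c b (has_inner_hit n c)
      \<subseteq> perms_by_hits n c (\<not> b) (has_inner_hit n c)" for b
  proof (rule image_subsetI)
    fix p assume "p \<in> perms_by_hits n c b (has_inner_hit n c)"
    then have p: "p permutes {1..n}" "p n = n" "evenperm p = b" and "has_inner_hit n c (hits n c p)"
      unfolding perms_by_hits_def by auto
    then obtain i where "hit_at n c p i" "i + c \<le> n"
      unfolding has_inner_hit_def hits_def by auto
    then have "has_inner_hit n c (hits n c (?r \<circ> p))"
      using hit_at_rotate_values[OF p(1,2)] unfolding has_inner_hit_def hits_def by auto
    moreover have "evenperm (?r \<circ> p) \<longleftrightarrow> \<not> b"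
      using evenperm_comp[OF permutes_imp_permutation[OF _ r(1)] permutes_imp_permutation[OF _ p(1)]]
        r(2) p(3) by simp
    ultimately show "?r \<circ> p \<in> perms_by_hits n c (\<not> b) (has_inner_hit n c)"
      using permutes_compose[OF p(1) r(1)] p(2) rn unfolding perms_by_hits_def by simp
  qed
qed

lemma card_perms_by_hits_final_hit_within_ends_even_odd:
  assumes n: "odd n" "n \<ge> 2" and c: "c < n"
  shows "card (perms_by_hits n c True (final_hit_within_ends n c))
    = card (perms_by_hits n c False (final_hit_within_ends n c))"
proof (rule card_eq_if_inj_flips[where f = swap_first_partner])
  have final_hit_within_ends_iff:
    "final_hit_within_ends n c H \<longleftrightarrow> n - c + 1 \<in> H - {1} \<and> H - {1} \<subseteq> {n - c + 1}" for H
    using c unfolding final_hit_within_ends_def by auto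
  show "finite (perms_by_hits n c b (final_hit_within_ends n c))" for b by (rule finite_perms_by_hits)
  have inv: "swap_first_partner (swap_first_partner p) = p" if "p \<in> perms_by_hits n c b P" for p b P
    using that swap_first_partner_props(4)[OF _ _ n] unfolding perms_by_hits_def by blast
  show "inj_on swap_first_partner (perms_by_hits n c b (final_hit_within_ends n c))" for b
    by (rule inj_on_inverseI[where g = swap_first_partner]) (rule inv)
  show "swap_first_partner ` perms_by_hits n c b (final_hit_within_ends n c)
      \<subseteq> perms_by_hits n c (\<not> b) (final_hit_within_ends n c)" for b
  proof (rule image_subsetI)
    fix p assume "p \<in> perms_by_hits n c b (final_hit_within_ends n c)"
    then have p: "p permutes {1..n}" "p n = n" "evenperm p = b"
      "final_hit_within_ends n c (hits n c p)"
      unfolding perms_by_hits_def by auto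
    have "final_hit_within_ends n c (hits n c (swap_first_partner p))"
      using p(4) unfolding final_hit_within_ends_iff hits_swap_first_partner[OF p(1,2) n] .
    then show "swap_first_partner p \<in> perms_by_hits n c (\<not> b) (final_hit_within_ends n c)"
      using swap_first_partner_props(1-3)[OF p(1,2) n] p(3)
      unfolding perms_by_hits_def by simp
  qed
qed

theorem lemma2p15:
  fixes c n :: nat
  assumes "odd c" and "odd n" and "c > 0" and "n > c" and "2 * c > n"
  shows "int (card (nH n c True)) - int (card (nH n c False))
       = int (card (nN n c False)) - int (card (nN n c True))"
proof -
  have n: "odd n" "n \<ge> 2" using assms(2-4) by auto
  show ?thesis
    using card_nN_split[OF assms(4)] card_final_hit_within_ends_split[OF assms(4)]
      card_perms_by_hits_inner_even_odd[OF n]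
      card_perms_by_hits_final_hit_within_ends_even_odd[OF n assms(4)]
    by simp
qed

end
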